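(* Let $\mathcal{H}_1,\mathcal{H}_2$ be finite-dimensional Hilbert spaces and let the set of free channels be $\mathcal{O}_{\mathrm{F}}=\bigcup_k\mathcal{O}_{\mathrm{F}_k}\subseteq\mathcal{O}(\mathcal{H}_1\to\mathcal{H}_2)$, where each $\mathcal{O}_{\mathrm{F}_k}$ is convex. For any resource channel $\Lambda\in\mathcal{O}(\mathcal{H}_1\to\mathcal{H}_2)\setminus\mathcal{O}_{\mathrm{F}}$, \[\inf_k\ \max_{\{p_i,\eta_i\}_i,\{M_i\}_i}\frac{p_{\mathrm{succ}}(\Lambda,\{p_i,\eta_i\}_i,\{M_i\}_i)}{\max_{\Xi_k\in\mathcal{O}_{\mathrm{F}_k}}p_{\mathrm{succ}}(\Xi_k,\{p_i,\eta_i\}_i,\{M_i\}_i)}=1+R_{\mathcal{O}_{\mathrm{F}}}(\Lambda).\]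
   Context: $\mathcal{O}(\mathcal{H}_1\to\mathcal{H}_2)$ is the set of quantum channels from operators on $\mathcal{H}_1$ to operators on $\mathcal{H}_2$; $\mathcal{I}_{\mathcal{H}_1}$ is the identity map on operators on $\mathcal{H}_1$. A state ensemble $\{p_i,\eta_i\}_i$ is a finite probability distribution with states $\eta_i$ on $\mathcal{H}_1\otimes\mathcal{H}_1$; $\{M_i\}_i$ is a POVM on $\mathcal{H}_1\otimes\mathcal{H}_2$; for a channel $\Gamma$, $p_{\mathrm{succ}}(\Gamma,\{p_i,\eta_i\}_i,\{M_i\}_i)=\sum_ip_i\operatorname{tr}[M_i(\mathcal{I}_{\mathcal{H}_1}\otimes\Gamma)(\eta_i)]$. The maximum is over all such ensembles and POVMs. The generalized robustness of a channel with respect to a set $\mathcal{G}$ of channels is $R_{\mathcal{G}}(\Lambda)=\min\{s\ge0:\exists\Theta\in\mathcal{O}(\mathcal{H}_1\to\mathcal{H}_2),\ \frac{\Lambda+s\Theta}{1+s}\in\mathcal{G}\}$. *)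

theory Defs
  imports "HOL-Analysis.Analysis" "HOL-Library.Extended_Real"
begin

text \<open>Operators on a finite-dimensional Hilbert space with orthonormal basis indexed by
  a finite type 'a are represented by their matrices  'a => 'a => complex.
  The tensor product space of spaces indexed by 'a and 'b is indexed by 'a * 'b.\<close>

type_synonym 'a op = "'a \<Rightarrow> 'a \<Rightarrow> complex"

definition tr :: "('a::finite) op \<Rightarrow> complex" where
  "tr A = (\<Sum>i\<in>UNIV. A i i)"

definition mmult :: "('a::finite) op \<Rightarrow> 'a op \<Rightarrow> 'a op" where
  "mmult A B = (\<lambda>i j. \<Sum>k\<in>UNIV. A i k * B k j)"

definition idop :: "'a op" where
  "idop = (\<lambda>i j. if i = j then 1 else 0)"

definition psd_on :: "'a set \<Rightarrow> 'a op \<Rightarrow> bool" where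
  "psd_on S A \<longleftrightarrow> (\<forall>v :: 'a \<Rightarrow> complex.
     Im (\<Sum>i\<in>S. \<Sum>j\<in>S. cnj (v i) * A i j * v j) = 0 \<and>
     Re (\<Sum>i\<in>S. \<Sum>j\<in>S. cnj (v i) * A i j * v j) \<ge> 0)"

definition psd :: "('a::finite) op \<Rightarrow> bool" where
  "psd A \<longleftrightarrow> psd_on UNIV A"

definition is_state :: "('a::finite) op \<Rightarrow> bool" where
  "is_state \<rho> \<longleftrightarrow> psd \<rho> \<and> tr \<rho> = 1"

text \<open>(id_C \<otimes> \<Gamma>) applied blockwise (correct for linear \<Gamma>).\<close>
definition id_tensor :: "('a op \<Rightarrow> 'b op) \<Rightarrow> ('c \<times> 'a) op \<Rightarrow> ('c \<times> 'b) op" where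
  "id_tensor \<Gamma> X = (\<lambda>(c, b) (c', b'). \<Gamma> (\<lambda>a a'. X (c, a) (c', a')) b b')"

definition is_linear_map :: "('a op \<Rightarrow> 'b op) \<Rightarrow> bool" where
  "is_linear_map \<Gamma> \<longleftrightarrow> (\<forall>X Y (c::complex).
     \<Gamma> (\<lambda>i j. c * X i j + Y i j) = (\<lambda>i j. c * \<Gamma> X i j + \<Gamma> Y i j))"

definition trace_preserving :: "(('a::finite) op \<Rightarrow> ('b::finite) op) \<Rightarrow> bool" where
  "trace_preserving \<Gamma> \<longleftrightarrow> (\<forall>X. tr (\<Gamma> X) = tr X)"

text \<open>Complete positivity: (id_n \<otimes> \<Gamma>) is positive for every ancilla dimension n
  (ancilla basis indexed by {..<n}).\<close>
definition completely_positive :: "(('a::finite) op \<Rightarrow> ('b::finite) op) \<Rightarrow> bool" where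
  "completely_positive \<Gamma> \<longleftrightarrow> (\<forall>(n::nat) (X :: (nat \<times> 'a) op).
     psd_on ({..<n} \<times> UNIV) X \<longrightarrow> psd_on ({..<n} \<times> UNIV) (id_tensor \<Gamma> X))"

definition channels :: "(('a::finite) op \<Rightarrow> ('b::finite) op) set" where
  "channels = {\<Gamma>. is_linear_map \<Gamma> \<and> trace_preserving \<Gamma> \<and> completely_positive \<Gamma>}"

definition convex_chans :: "(('a::finite) op \<Rightarrow> ('b::finite) op) set \<Rightarrow> bool" where
  "convex_chans G \<longleftrightarrow> (\<forall>\<Xi>1\<in>G. \<forall>\<Xi>2\<in>G. \<forall>t::real. 0 \<le> t \<and> t \<le> 1 \<longrightarrow>
     (\<lambda>X i j. of_real t * \<Xi>1 X i j + of_real (1 - t) * \<Xi>2 X i j) \<in> G)"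

text \<open>Discrimination tasks: a finite state ensemble {p_i, \<eta>_i}_{i<m} of states on H1\<otimes>H1
  together with a POVM {M_i}_{i<m} on H1\<otimes>H2.\<close>
definition tasks :: "(nat \<times> (nat \<Rightarrow> real) \<times> (nat \<Rightarrow> (('a::finite) \<times> 'a) op)
                        \<times> (nat \<Rightarrow> ('a \<times> ('b::finite)) op)) set" where
  "tasks = {(m, p, \<eta>, M).
      (\<forall>i<m. 0 \<le> p i) \<and> (\<Sum>i<m. p i) = 1 \<and> (\<forall>i<m. is_state (\<eta> i)) \<and>
      (\<forall>i<m. psd (M i)) \<and> (\<lambda>x y. \<Sum>i<m. M i x y) = idop}"

definition p_succ :: "(('a::finite) op \<Rightarrow> ('b::finite) op) \<Rightarrow>
    (nat \<times> (nat \<Rightarrow> real) \<times> (nat \<Rightarrow> ('a \<times> 'a) op) \<times> (nat \<Rightarrow> ('a \<times> 'b) op)) \<Rightarrow> real" where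
  "p_succ \<Gamma> T = (case T of (m, p, \<eta>, M) \<Rightarrow>
      (\<Sum>i<m. p i * Re (tr (mmult (M i) (id_tensor \<Gamma> (\<eta> i))))))"

text \<open>Generalized robustness (inf; +\<infinity> if no admissible s exists).\<close>
definition robustness :: "(('a::finite) op \<Rightarrow> ('b::finite) op) set \<Rightarrow> ('a op \<Rightarrow> 'b op) \<Rightarrow> ereal" where
  "robustness G \<Lambda> = Inf {ereal s | s. 0 \<le> s \<and> (\<exists>\<Theta>\<in>channels.
      (\<lambda>X i j. (\<Lambda> X i j + of_real s * \<Theta> X i j) / of_real (1 + s)) \<in> G)}"

end

theory Submission
  imports Defs
begin

text \<open>If (\<Lambda> + s \<Theta>) / (1 + s) lies in F_k, then on every task \<Lambda> succeeds with
  probability at most 1 + s times that of this free channel, which gives the upper bound.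
  For the lower bound fix k and t < 1 + R(F_k), and view the Choi matrices J(\<Gamma>) as vectors
  of a real Euclidean space. The compact convex set t cl J(F_k) - J(\<Lambda>) misses the closed
  convex cone of positive semidefinite matrices: otherwise t' J(\<Xi>) - J(\<Lambda>) would be positive
  semidefinite for some \<Xi> in F_k and t' < 1 + R(F_k), which makes (t' \<Xi> - \<Lambda>) / (t' - 1) a
  channel and t' - 1 an admissible weight. A separating hyperplane yields a vector of the dual
  cone. Its Hermitian part, suitably scaled, is one element of a two-outcome measurement, and
  discriminating the maximally entangled state with it gives a task on which \<Lambda> beats every
  \<Xi> in F_k by a factor larger than t. Finally the robustness with respect to the union of the
  F_k is the infimum of the robustnesses with respect to the F_k.\<close>

section \<open>Positive semidefinite matrices\<close>

definition quad_form :: "'a set \<Rightarrow> 'a op \<Rightarrow> ('a \<Rightarrow> complex) \<Rightarrow> complex" where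
  "quad_form S A v = (\<Sum>i\<in>S. \<Sum>j\<in>S. cnj (v i) * A i j * v j)"

lemma psd_on_iff_quad_form: "psd_on S A \<longleftrightarrow> (\<forall>v. Im (quad_form S A v) = 0 \<and> Re (quad_form S A v) \<ge> 0)"
  by (simp add: psd_on_def quad_form_def)

lemma quad_form_restrict:
  assumes "finite S" "T \<subseteq> S" "\<And>x. x \<notin> T \<Longrightarrow> v x = 0"
  shows "quad_form S A v = quad_form T A v"
proof -
  have "(\<Sum>i\<in>S. \<Sum>j\<in>S. cnj (v i) * A i j * v j) = (\<Sum>i\<in>T. \<Sum>j\<in>S. cnj (v i) * A i j * v j)"
    by (rule sum.mono_neutral_right) (use assms in \<open>auto intro: finite_subset\<close>)
  also have "\<dots> = (\<Sum>i\<in>T. \<Sum>j\<in>T. cnj (v i) * A i j * v j)"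
    by (intro sum.cong refl sum.mono_neutral_right) (use assms in \<open>auto intro: finite_subset\<close>)
  finally show ?thesis by (simp add: quad_form_def)
qed

lemma quad_form_linear: "quad_form S (\<lambda>i j. a * A i j + b * B i j) v = a * quad_form S A v + b * quad_form S B v"
  unfolding quad_form_def by (simp add: sum.distrib sum_distrib_left algebra_simps)

lemma quad_form_outer:
  "quad_form S (\<lambda>i j. u i * cnj (u j)) v = of_real ((cmod (\<Sum>i\<in>S. cnj (v i) * u i))\<^sup>2)"
proof -
  define z where "z = (\<Sum>i\<in>S. cnj (v i) * u i)"
  have "quad_form S (\<lambda>i j. u i * cnj (u j)) v = z * cnj z"
    unfolding quad_form_def z_def sum_product cnj_sum by (simp add: mult_ac)
  then show ?thesis unfolding z_def[symmetric] by (simp only: complex_norm_square)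
qed

lemma psd_on_outer: "psd_on S (\<lambda>i j. u i * cnj (u j))"
  unfolding psd_on_iff_quad_form quad_form_outer by simp

lemma psd_on_nonneg_comb:
  assumes "psd_on S A" "psd_on S B" "a \<ge> 0" "b \<ge> 0"
  shows "psd_on S (\<lambda>i j. of_real a * A i j + of_real b * B i j)"
  using assms unfolding psd_on_iff_quad_form quad_form_linear by simp

lemma psd_on_scale:
  assumes "psd_on S A" "a \<ge> 0"
  shows "psd_on S (\<lambda>i j. of_real a * A i j)"
  using psd_on_nonneg_comb[OF assms(1) assms(1) assms(2) order_refl] by simp

lemma psd_on_cong:
  assumes "\<And>x y. x \<in> S \<Longrightarrow> y \<in> S \<Longrightarrow> A x y = B x y"
  shows "psd_on S A \<longleftrightarrow> psd_on S B"
  unfolding psd_on_def using assms by (simp cong: sum.cong)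

lemma psd_on_subset:
  assumes "finite S" "T \<subseteq> S" "psd_on S A"
  shows "psd_on T A"
  unfolding psd_on_iff_quad_form
proof
  fix v :: "'a \<Rightarrow> complex"
  let ?w = "\<lambda>x. if x \<in> T then v x else 0"
  have "quad_form T A v = quad_form T A ?w" by (simp add: quad_form_def)
  also have "\<dots> = quad_form S A ?w" by (rule quad_form_restrict[symmetric]) (use assms in auto)
  finally show "Im (quad_form T A v) = 0 \<and> 0 \<le> Re (quad_form T A v)"
    using assms(3) unfolding psd_on_iff_quad_form by simp
qed

lemma quad_form_unit_vector:
  assumes "finite S" "i \<in> S"
  shows "quad_form S A (\<lambda>x. if x = i then 1 else 0) = A i i"
proof -
  have "quad_form S A (\<lambda>x. if x = i then 1 else 0) = quad_form {i} A (\<lambda>x. if x = i then 1 else 0)"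
    by (rule quad_form_restrict) (use assms in auto)
  then show ?thesis by (simp add: quad_form_def)
qed

lemma psd_on_diag:
  assumes "psd_on S A" "finite S" "i \<in> S"
  shows "Im (A i i) = 0" "Re (A i i) \<ge> 0"
  using assms(1) quad_form_unit_vector[OF assms(2,3), of A]
  unfolding psd_on_iff_quad_form by metis+

lemma psd_on_hermitian:
  assumes "psd_on S A" "finite S" "i \<in> S" "j \<in> S"
  shows "A j i = cnj (A i j)"
proof (cases "i = j")
  case True
  then show ?thesis using psd_on_diag[OF assms(1-3)] by (simp add: complex_eq_iff)
next
  case False
  let ?w = "\<lambda>x. if x = i then (1::complex) else if x = j then 1 else 0"
  let ?u = "\<lambda>x. if x = i then (1::complex) else if x = j then \<i> else 0"
  have "quad_form S A ?w = quad_form {i,j} A ?w" by (rule quad_form_restrict) (use assms in auto)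
  also have "\<dots> = A i i + A i j + A j i + A j j" using False by (simp add: quad_form_def)
  finally have 1: "Im (A i i + A i j + A j i + A j j) = 0"
    using assms(1) unfolding psd_on_iff_quad_form by metis
  have "quad_form S A ?u = quad_form {i,j} A ?u" by (rule quad_form_restrict) (use assms in auto)
  also have "\<dots> = A i i + A i j * \<i> - \<i> * A j i + A j j"
    using False by (simp add: quad_form_def algebra_simps)
  finally have 2: "Im (A i i + A i j * \<i> - \<i> * A j i + A j j) = 0"
    using assms(1) unfolding psd_on_iff_quad_form by metis
  have "Im (A i i) = 0" "Im (A j j) = 0"
    using psd_on_diag(1)[OF assms(1,2)] assms(3,4) by auto
  then show ?thesis using 1 2 by (simp add: complex_eq_iff)
qed

lemma quad_form_add_unit_vector:
  assumes "finite S" "i \<in> S"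
  shows "quad_form S A (\<lambda>x. v x + (if x = i then \<alpha> else 0)) =
    quad_form S A v + cnj \<alpha> * (\<Sum>j\<in>S. A i j * v j) + \<alpha> * (\<Sum>x\<in>S. cnj (v x) * A x i) + cnj \<alpha> * \<alpha> * A i i"
proof -
  let ?d = "\<lambda>x. if x = i then \<alpha> else 0"
  have delta: "(\<Sum>y\<in>S. f y * ?d y) = f i * \<alpha>" for f :: "_ \<Rightarrow> complex"
    using assms by (simp add: if_distrib[of "times _"] cong: if_cong)
  have cnj_delta: "(\<Sum>x\<in>S. cnj (?d x) * f x) = cnj \<alpha> * f i" for f :: "_ \<Rightarrow> complex"
    using assms by (simp add: if_distrib[of cnj] if_distrib[of "\<lambda>a. a * _"] cong: if_cong)
  have "cnj (v x + ?d x) * A x y * (v y + ?d y) =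
     cnj (v x) * A x y * v y + (cnj (v x) * A x y) * ?d y + cnj (?d x) * (A x y * v y)
     + cnj (?d x) * (A x y * ?d y)" for x y
    by (simp add: algebra_simps)
  then have "quad_form S A (\<lambda>x. v x + ?d x) = quad_form S A v + (\<Sum>x\<in>S. \<Sum>y\<in>S. (cnj (v x) * A x y) * ?d y)
     + (\<Sum>x\<in>S. \<Sum>y\<in>S. cnj (?d x) * (A x y * v y)) + (\<Sum>x\<in>S. \<Sum>y\<in>S. cnj (?d x) * (A x y * ?d y))"
    unfolding quad_form_def by (simp only: sum.distrib)
  also have "\<dots> = quad_form S A v + (\<Sum>x\<in>S. cnj (v x) * A x i * \<alpha>)
     + cnj \<alpha> * (\<Sum>y\<in>S. A i y * v y) + cnj \<alpha> * (A i i * \<alpha>)"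
    by (simp only: delta cnj_delta sum_distrib_left[symmetric])
  finally show ?thesis by (simp add: sum_distrib_left algebra_simps)
qed

lemma psd_on_zero_diag_row:
  assumes "psd_on S A" "finite S" "i \<in> S" "j \<in> S" "A i i = 0"
  shows "A i j = 0"
proof (rule ccontr)
  assume nz: "A i j \<noteq> 0"
  define t where "t = (Re (A j j) + 1) / (2 * (cmod (A i j))\<^sup>2)"
  let ?e = "\<lambda>x. if x = j then (1::complex) else 0"
  let ?\<alpha> = "- of_real t * A i j"
  have "(\<Sum>y\<in>S. A i y * ?e y) = A i j" "(\<Sum>x\<in>S. cnj (?e x) * A x i) = A j i"
    using assms(2,4) by (simp_all add: if_distrib[of cnj] if_distrib[of "times _"] if_distrib[of "\<lambda>a. a * _"] cong: if_cong)
  then have "quad_form S A (\<lambda>x. ?e x + (if x = i then ?\<alpha> else 0)) = A j j + cnj ?\<alpha> * A i j + ?\<alpha> * A j i"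
    using quad_form_add_unit_vector[OF assms(2,3), of A ?e ?\<alpha>] quad_form_unit_vector[OF assms(2,4)] assms(5)
    by simp
  also have "\<dots> = A j j - of_real (2 * t * (cmod (A i j))\<^sup>2)"
    using psd_on_hermitian[OF assms(1-4)] complex_norm_square[of "A i j"] by (simp add: algebra_simps)
  also have "2 * t * (cmod (A i j))\<^sup>2 = Re (A j j) + 1"
    using nz by (simp add: t_def)
  finally have "Re (quad_form S A (\<lambda>x. ?e x + (if x = i then ?\<alpha> else 0))) = -1"
    by simp
  then show False
    using assms(1) unfolding psd_on_iff_quad_form by (metis neg_0_le_iff_le not_one_le_zero)
qed

lemma psd_on_schur_complement:
  assumes "psd_on S A" "finite S" "i \<in> S" "A i i \<noteq> 0"
  shows "psd_on S (\<lambda>x y. A x y - A x i * A i y / A i i)"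
  unfolding psd_on_iff_quad_form
proof
  fix v :: "_ \<Rightarrow> complex"
  define a where "a = A i i"
  have ca: "cnj a = a"
    using psd_on_diag(1)[OF assms(1-3)] by (simp add: a_def complex_eq_iff)
  define c where "c = (\<Sum>j\<in>S. A i j * v j)"
  have hc: "(\<Sum>x\<in>S. cnj (v x) * A x i) = cnj c"
    unfolding c_def cnj_sum
    by (intro sum.cong refl) (simp add: psd_on_hermitian[OF assms(1,2,3)] mult.commute)
  have "quad_form S (\<lambda>x y. A x y - A x i * A i y / A i i) v =
     quad_form S A v - (\<Sum>x\<in>S. \<Sum>y\<in>S. (cnj (v x) * A x i) * (A i y * v y)) / a"
    unfolding quad_form_def a_def by (simp add: algebra_simps sum_subtractf sum_divide_distrib)
  also have "(\<Sum>x\<in>S. \<Sum>y\<in>S. (cnj (v x) * A x i) * (A i y * v y)) = cnj c * c"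
    by (simp add: sum_product[symmetric] hc c_def)
  also have "quad_form S A v - cnj c * c / a =
      quad_form S A v + cnj (- c / a) * c + (- c / a) * cnj c + cnj (- c / a) * (- c / a) * a"
    using assms(4) ca by (simp add: a_def field_simps)
  also have "\<dots> = quad_form S A (\<lambda>x. v x + (if x = i then - c / a else 0))"
    using quad_form_add_unit_vector[OF assms(2,3), of A v "- c / a"] hc by (simp add: c_def a_def)
  finally show "Im (quad_form S (\<lambda>x y. A x y - A x i * A i y / A i i) v) = 0 \<and>
      0 \<le> Re (quad_form S (\<lambda>x y. A x y - A x i * A i y / A i i) v)"
    using assms(1) unfolding psd_on_iff_quad_form by simp
qed

lemma trace_mult_insert_zero_cross:
  fixes A C :: "'a op"
  assumes "finite S" "i \<notin> S" "\<forall>y\<in>insert i S. C i y = 0 \<and> C y i = 0"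
  shows "(\<Sum>x\<in>insert i S. \<Sum>y\<in>insert i S. A x y * C y x) = (\<Sum>x\<in>S. \<Sum>y\<in>S. A x y * C y x)"
proof -
  have "(\<Sum>x\<in>insert i S. \<Sum>y\<in>insert i S. A x y * C y x) = (\<Sum>x\<in>S. \<Sum>y\<in>insert i S. A x y * C y x)"
    using assms by (simp add: sum.insert)
  also have "\<dots> = (\<Sum>x\<in>S. \<Sum>y\<in>S. A x y * C y x)"
    using assms by (intro sum.cong[OF refl]) (simp add: sum.insert)
  finally show ?thesis .
qed

lemma trace_mult_schur_decomposition:
  assumes "psd_on S B" "finite S" "i \<in> S" "B i i \<noteq> 0"
  shows "(\<Sum>x\<in>S. \<Sum>y\<in>S. A x y * B y x) =
    (\<Sum>x\<in>S. \<Sum>y\<in>S. A x y * (B y x - B y i * B i x / B i i)) + quad_form S A (\<lambda>y. B y i) / B i i"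
proof -
  have "A x y * B y x = A x y * (B y x - B y i * B i x / B i i) + cnj (B x i) * A x y * B y i / B i i"
    if "x \<in> S" for x y
    using psd_on_hermitian[OF assms(1,2) that assms(3)] assms(4) by (simp add: field_simps)
  then have "(\<Sum>x\<in>S. \<Sum>y\<in>S. A x y * B y x) =
      (\<Sum>x\<in>S. \<Sum>y\<in>S. A x y * (B y x - B y i * B i x / B i i) + cnj (B x i) * A x y * B y i / B i i)"
    by (intro sum.cong[OF refl]) simp
  then show ?thesis by (simp add: sum.distrib quad_form_def sum_divide_distrib)
qed

text \<open>Induction on the index set: the last row and column of B are removed by subtracting the
  rank-one term that they span, leaving a positive semidefinite Schur complement.\<close>
lemma psd_on_trace_mult_nonneg:
  assumes "finite S" "psd_on S A" "psd_on S B"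
  shows "Im (\<Sum>x\<in>S. \<Sum>y\<in>S. A x y * B y x) = 0 \<and> Re (\<Sum>x\<in>S. \<Sum>y\<in>S. A x y * B y x) \<ge> 0"
  using assms
proof (induction S arbitrary: A B rule: finite_induct)
  case empty
  then show ?case by simp
next
  case (insert i S)
  let ?T = "insert i S"
  have fT: "finite ?T" using insert by simp
  have AS: "psd_on S A" by (rule psd_on_subset[OF fT _ insert.prems(1)]) auto
  show ?case
  proof (cases "B i i = 0")
    case True
    have "B i y = 0 \<and> B y i = 0" if "y \<in> ?T" for y
      using psd_on_zero_diag_row[OF insert.prems(2) fT _ that True]
        psd_on_hermitian[OF insert.prems(2) fT _ that] by simp
    then have "(\<Sum>x\<in>?T. \<Sum>y\<in>?T. A x y * B y x) = (\<Sum>x\<in>S. \<Sum>y\<in>S. A x y * B y x)"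
      using insert.hyps by (intro trace_mult_insert_zero_cross) auto
    moreover have "psd_on S B" by (rule psd_on_subset[OF fT _ insert.prems(2)]) auto
    ultimately show ?thesis using insert.IH[OF AS] by simp
  next
    case False
    define B' where "B' = (\<lambda>x y. B x y - B x i * B i y / B i i)"
    have "psd_on ?T B'"
      unfolding B'_def by (rule psd_on_schur_complement[OF insert.prems(2) fT _ False]) simp
    then have B'S: "psd_on S B'" by (rule psd_on_subset[OF fT, rotated]) auto
    obtain r where r: "B i i = of_real r" "r \<ge> 0"
      using psd_on_diag[OF insert.prems(2) fT, of i] by (metis complex_surj insertI1 complex_of_real_def)
    have "(\<Sum>x\<in>?T. \<Sum>y\<in>?T. A x y * B y x) =
        (\<Sum>x\<in>?T. \<Sum>y\<in>?T. A x y * B' y x) + quad_form ?T A (\<lambda>y. B y i) / of_real r"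
      unfolding B'_def r(1)[symmetric]
      by (rule trace_mult_schur_decomposition[OF insert.prems(2) fT _ False]) simp
    also have "(\<Sum>x\<in>?T. \<Sum>y\<in>?T. A x y * B' y x) = (\<Sum>x\<in>S. \<Sum>y\<in>S. A x y * B' y x)"
      using insert.hyps False by (intro trace_mult_insert_zero_cross) (auto simp: B'_def)
    finally show ?thesis
      using insert.IH[OF AS B'S] insert.prems(1) r(2) unfolding psd_on_iff_quad_form by simp
  qed
qed

section \<open>Choi matrices and complete positivity\<close>

definition matrix_unit :: "'a \<Rightarrow> 'a \<Rightarrow> 'a op" where
  "matrix_unit a a' = (\<lambda>x x'. if x = a \<and> x' = a' then 1 else 0)"

definition max_entangled :: "('a \<times> 'a) op" where
  "max_entangled = (\<lambda>(c, a) (c', a'). if c = a \<and> c' = a' then 1 else 0)"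

definition choi :: "('a op \<Rightarrow> 'b op) \<Rightarrow> ('a \<times> 'b) op" where
  "choi \<Gamma> = id_tensor \<Gamma> max_entangled"

lemma choi_apply: "choi \<Gamma> (a, b) (a', b') = \<Gamma> (matrix_unit a a') b b'"
  unfolding choi_def id_tensor_def max_entangled_def matrix_unit_def by (simp add: eq_commute)

lemma choi_comb:
  "choi (\<lambda>X i j. of_real u * \<Xi>1 X i j + of_real v * \<Xi>2 X i j) =
    (\<lambda>p q. of_real u * choi \<Xi>1 p q + of_real v * choi \<Xi>2 p q)"
  by (intro ext) (auto simp: choi_apply split: prod.splits)

lemma psd_max_entangled: "psd (max_entangled :: ('a::finite \<times> 'a) op)"
proof -
  have "max_entangled = (\<lambda>p q. of_bool (fst p = snd p) * cnj (of_bool (fst q = snd q)) :: complex)"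
    by (intro ext) (simp add: max_entangled_def case_prod_beta)
  show ?thesis unfolding psd_def \<open>max_entangled = _\<close> by (rule psd_on_outer)
qed

lemma linear_map_comb:
  assumes "is_linear_map \<Gamma>"
  shows "\<Gamma> (\<lambda>i j. c * X i j + Y i j) = (\<lambda>i j. c * \<Gamma> X i j + \<Gamma> Y i j)"
  using assms unfolding is_linear_map_def by blast

lemma linear_map_zero:
  assumes "is_linear_map \<Gamma>"
  shows "\<Gamma> (\<lambda>i j. 0) = (\<lambda>i j. 0)"
proof -
  have "\<Gamma> (\<lambda>i j. 0) = (\<lambda>i j. \<Gamma> (\<lambda>i j. 0) i j + \<Gamma> (\<lambda>i j. 0) i j)"
    using linear_map_comb[OF assms, of 1 "\<lambda>i j. 0" "\<lambda>i j. 0"] by simp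
  then show ?thesis by (metis add_cancel_right_right)
qed

lemma linear_map_scale:
  assumes "is_linear_map \<Gamma>"
  shows "\<Gamma> (\<lambda>i j. c * X i j) = (\<lambda>i j. c * \<Gamma> X i j)"
  using linear_map_comb[OF assms, of c X "\<lambda>i j. 0"] linear_map_zero[OF assms] by simp

lemma linear_map_sum:
  assumes "is_linear_map \<Gamma>" "finite I"
  shows "\<Gamma> (\<lambda>i j. \<Sum>k\<in>I. c k * X k i j) = (\<lambda>i j. \<Sum>k\<in>I. c k * \<Gamma> (X k) i j)"
  using assms(2)
proof (induction I rule: finite_induct)
  case empty
  then show ?case using linear_map_zero[OF assms(1)] by simp
next
  case (insert k I)
  then show ?case
    using linear_map_comb[OF assms(1), of "c k" "X k" "\<lambda>i j. \<Sum>k\<in>I. c k * X k i j"] by simp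
qed

lemma linear_map_expand:
  assumes "is_linear_map \<Gamma>"
  shows "\<Gamma> (A :: ('a::finite) op) b b' = (\<Sum>a\<in>UNIV. \<Sum>a'\<in>UNIV. A a a' * \<Gamma> (matrix_unit a a') b b')"
proof -
  have A: "A = (\<lambda>i j. \<Sum>p\<in>UNIV. A (fst p) (snd p) * matrix_unit (fst p) (snd p) i j)"
  proof (intro ext)
    fix i j
    have "(\<Sum>p\<in>UNIV. A (fst p) (snd p) * matrix_unit (fst p) (snd p) i j) = (\<Sum>p\<in>UNIV. if p = (i, j) then A i j else 0)"
      by (intro sum.cong refl) (auto simp: matrix_unit_def)
    then show "A i j = (\<Sum>p\<in>UNIV. A (fst p) (snd p) * matrix_unit (fst p) (snd p) i j)" by simp
  qed
  then have "\<Gamma> A b b' = (\<Sum>p\<in>UNIV. A (fst p) (snd p) * \<Gamma> (matrix_unit (fst p) (snd p)) b b')"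
    by (subst A, subst linear_map_sum[OF assms]) auto
  also have "\<dots> = (\<Sum>a\<in>UNIV. \<Sum>a'\<in>UNIV. A a a' * \<Gamma> (matrix_unit a a') b b')"
    by (simp add: UNIV_Times_UNIV[symmetric] sum.cartesian_product case_prod_beta del: UNIV_Times_UNIV)
  finally show ?thesis .
qed

lemma id_tensor_expand:
  fixes \<Gamma> :: "('a::finite) op \<Rightarrow> 'b op"
  assumes "is_linear_map \<Gamma>"
  shows "id_tensor \<Gamma> X (c, b) (c', b') =
    (\<Sum>a\<in>UNIV. \<Sum>a'\<in>UNIV. X (c, a) (c', a') * choi \<Gamma> (a, b) (a', b'))"
  unfolding id_tensor_def choi_apply by (simp, subst linear_map_expand[OF assms], rule refl)

lemma id_tensor_max_entangled_scaled:
  assumes "is_linear_map \<Gamma>"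
  shows "id_tensor \<Gamma> (\<lambda>x y. max_entangled x y / c) = (\<lambda>x y. choi \<Gamma> x y / c)"
  using linear_map_scale[OF assms, of "1 / c"]
  by (auto simp: choi_def id_tensor_def intro!: ext)

text \<open>The quadratic form of the identity tensored with a map, evaluated at X and v, is the
  trace of the Choi matrix against this operator.\<close>
definition contraction :: "'c set \<Rightarrow> ('c \<times> 'a) op \<Rightarrow> ('c \<times> 'b \<Rightarrow> complex) \<Rightarrow> ('a \<times> 'b) op" where
  "contraction C X v = (\<lambda>q p. \<Sum>c\<in>C. \<Sum>c'\<in>C. X (c, fst p) (c', fst q) * v (c', snd q) * cnj (v (c, snd p)))"

lemma quad_form_id_tensor:
  fixes \<Gamma> :: "('a::finite) op \<Rightarrow> ('b::finite) op" and X :: "('c \<times> 'a) op"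
  assumes lin: "is_linear_map \<Gamma>" and "finite C"
  shows "quad_form (C \<times> UNIV) (id_tensor \<Gamma> X) v = (\<Sum>p\<in>UNIV. \<Sum>q\<in>UNIV. choi \<Gamma> p q * contraction C X v q p)"
proof -
  let ?S = "C \<times> (UNIV :: 'b set)"
  let ?J = "choi \<Gamma>"
  have "quad_form ?S (id_tensor \<Gamma> X) v = (\<Sum>i\<in>?S. \<Sum>j\<in>?S. \<Sum>a\<in>UNIV. \<Sum>a'\<in>UNIV.
      cnj (v i) * X (fst i, a) (fst j, a') * ?J (a, snd i) (a', snd j) * v j)"
    unfolding quad_form_def
  proof (rule sum.cong[OF refl], rule sum.cong[OF refl])
    fix i j :: "'c \<times> 'b"
    show "cnj (v i) * id_tensor \<Gamma> X i j * v j = (\<Sum>a\<in>UNIV. \<Sum>a'\<in>UNIV.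
      cnj (v i) * X (fst i, a) (fst j, a') * ?J (a, snd i) (a', snd j) * v j)"
      using id_tensor_expand[OF lin, of X "fst i" "snd i" "fst j" "snd j"]
      by (simp add: sum_distrib_left sum_distrib_right mult.assoc)
  qed
  also have "\<dots> = (\<Sum>(i, j, a, a')\<in>?S \<times> ?S \<times> UNIV \<times> UNIV.
      cnj (v i) * X (fst i, a) (fst j, a') * ?J (a, snd i) (a', snd j) * v j)"
    by (simp add: sum.cartesian_product)
  also have "\<dots> = (\<Sum>(p, q, c, c')\<in>UNIV \<times> UNIV \<times> C \<times> C.
      ?J p q * (X (c, fst p) (c', fst q) * v (c', snd q) * cnj (v (c, snd p))))"
    by (rule sum.reindex_bij_witness[where i = "\<lambda>(p, q, c, c'). ((c, snd p), (c', snd q), fst p, fst q)"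
          and j = "\<lambda>(i, j, a, a'). ((a, snd i), (a', snd j), fst i, fst j)"]) (auto simp: algebra_simps)
  also have "\<dots> = (\<Sum>p\<in>UNIV. \<Sum>q\<in>UNIV. ?J p q * contraction C X v q p)"
    unfolding contraction_def by (simp add: sum.cartesian_product sum_distrib_left) (auto intro!: sum.cong)
  finally show ?thesis .
qed

lemma psd_contraction:
  fixes X :: "('c \<times> 'a::finite) op" and v :: "'c \<times> 'b::finite \<Rightarrow> complex"
  assumes "finite C" and X: "psd_on (C \<times> UNIV) X"
  shows "psd (contraction C X v)"
  unfolding psd_def psd_on_iff_quad_form
proof
  fix w :: "'a \<times> 'b \<Rightarrow> complex"
  define z where "z = (\<lambda>(c, a). \<Sum>b\<in>UNIV. v (c, b) * cnj (w (a, b)))"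
  let ?S = "C \<times> (UNIV :: 'a set)"
  have "quad_form UNIV (contraction C X v) w = (\<Sum>(q, p, c, c')\<in>UNIV \<times> UNIV \<times> C \<times> C.
      cnj (w q) * X (c, fst p) (c', fst q) * v (c', snd q) * cnj (v (c, snd p)) * w p)"
    unfolding quad_form_def contraction_def
    by (simp add: sum.cartesian_product sum_distrib_left sum_distrib_right mult.assoc)
       (auto intro!: sum.cong simp: algebra_simps)
  also have "\<dots> = (\<Sum>(i, j, b, b')\<in>?S \<times> ?S \<times> UNIV \<times> UNIV.
      cnj (v (fst i, b)) * w (snd i, b) * X i j * (v (fst j, b') * cnj (w (snd j, b'))))"
    by (rule sum.reindex_bij_witness[where i = "\<lambda>(i, j, b, b'). ((snd j, b'), (snd i, b), fst i, fst j)"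
          and j = "\<lambda>(q, p, c, c'). ((c, fst p), (c', fst q), snd p, snd q)"]) (auto simp: algebra_simps)
  also have "\<dots> = quad_form ?S X z"
    unfolding quad_form_def sum.cartesian_product[symmetric]
    by (simp add: z_def split_def cnj_sum sum_distrib_left sum_distrib_right mult_ac)
  finally show "Im (quad_form UNIV (contraction C X v) w) = 0 \<and> 0 \<le> Re (quad_form UNIV (contraction C X v) w)"
    using X unfolding psd_on_iff_quad_form by simp
qed

lemma psd_on_id_tensor:
  fixes \<Gamma> :: "('a::finite) op \<Rightarrow> ('b::finite) op" and X :: "('c \<times> 'a) op"
  assumes "is_linear_map \<Gamma>" "psd (choi \<Gamma>)" "finite C" "psd_on (C \<times> UNIV) X"
  shows "psd_on (C \<times> UNIV) (id_tensor \<Gamma> X)"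
  unfolding psd_on_iff_quad_form quad_form_id_tensor[OF assms(1,3)]
proof
  fix v
  show "Im (\<Sum>p\<in>UNIV. \<Sum>q\<in>UNIV. choi \<Gamma> p q * contraction C X v q p) = 0 \<and>
      0 \<le> Re (\<Sum>p\<in>UNIV. \<Sum>q\<in>UNIV. choi \<Gamma> p q * contraction C X v q p)"
    using psd_contraction[OF assms(3,4)] assms(2) unfolding psd_def
    by (intro psd_on_trace_mult_nonneg) auto
qed

lemma psd_on_reindex:
  assumes "bij_betw f S T" "psd_on S (\<lambda>x y. A (f x) (f y))"
  shows "psd_on T A"
  unfolding psd_on_iff_quad_form
proof
  fix v
  have "quad_form T A v = quad_form S (\<lambda>x y. A (f x) (f y)) (v \<circ> f)"
    unfolding quad_form_def using assms(1)
    by (simp add: sum.reindex_bij_betw[symmetric, where h = f])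
  then show "Im (quad_form T A v) = 0 \<and> 0 \<le> Re (quad_form T A v)"
    using assms(2) unfolding psd_on_iff_quad_form by simp
qed

lemma completely_positive_iff_psd_choi:
  fixes \<Gamma> :: "('a::finite) op \<Rightarrow> ('b::finite) op"
  assumes lin: "is_linear_map \<Gamma>"
  shows "completely_positive \<Gamma> \<longleftrightarrow> psd (choi \<Gamma>)"
proof
  assume cp: "completely_positive \<Gamma>"
  txt \<open>Identify the ancilla {..<CARD('a)} with 'a; then X is the maximally entangled operator.\<close>
  obtain h :: "nat \<Rightarrow> 'a" where h: "bij_betw h {..<CARD('a)} UNIV"
    using ex_bij_betw_nat_finite[of "UNIV :: 'a set"] by (auto simp: atLeast0LessThan)
  let ?S = "{..<CARD('a)} \<times> (UNIV :: 'a set)"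
  define X :: "(nat \<times> 'a) op"
    where "X = (\<lambda>p q. of_bool (fst p < CARD('a) \<and> snd p = h (fst p)) *
                      cnj (of_bool (fst q < CARD('a) \<and> snd q = h (fst q))))"
  have "psd_on ?S X" unfolding X_def by (rule psd_on_outer)
  then have "psd_on ({..<CARD('a)} \<times> UNIV) (id_tensor \<Gamma> X)"
    using cp unfolding completely_positive_def by blast
  moreover have "id_tensor \<Gamma> X p q = choi \<Gamma> (map_prod h id p) (map_prod h id q)"
    if "p \<in> ({..<CARD('a)} \<times> UNIV)" "q \<in> ({..<CARD('a)} \<times> UNIV)" for p q
  proof -
    have "(\<lambda>x x'. X (fst p, x) (fst q, x')) = matrix_unit (h (fst p)) (h (fst q))"
      using that by (auto simp: X_def matrix_unit_def intro!: ext)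
    then show ?thesis by (cases p; cases q) (simp add: id_tensor_def choi_apply)
  qed
  ultimately have "psd_on ({..<CARD('a)} \<times> UNIV) (\<lambda>p q. choi \<Gamma> (map_prod h id p) (map_prod h id q))"
    by (simp cong: psd_on_cong)
  moreover have "bij_betw (map_prod h id) ({..<CARD('a)} \<times> UNIV) (UNIV :: ('a \<times> 'b) set)"
    using bij_betw_map_prod[OF h bij_betw_id[of "UNIV :: 'b set"]] by simp
  ultimately show "psd (choi \<Gamma>)"
    unfolding psd_def by (intro psd_on_reindex[of "map_prod h id"]) auto
next
  assume "psd (choi \<Gamma>)"
  then show "completely_positive \<Gamma>"
    unfolding completely_positive_def using psd_on_id_tensor[OF lin] by blast
qed

lemma psd_choi_channel: "\<Gamma> \<in> channels \<Longrightarrow> psd (choi \<Gamma>)"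
  unfolding channels_def using completely_positive_iff_psd_choi by blast

lemma psd_id_tensor_channel:
  fixes \<eta> :: "('c::finite \<times> 'a::finite) op"
  assumes "\<Gamma> \<in> channels" "psd \<eta>"
  shows "psd (id_tensor \<Gamma> \<eta>)"
  using psd_on_id_tensor[of \<Gamma> UNIV \<eta>] assms psd_choi_channel[OF assms(1)]
  unfolding psd_def channels_def by simp

section \<open>Traces and success probabilities\<close>

lemma psd_hermitian: "psd (A :: ('i::finite) op) \<Longrightarrow> A j i = cnj (A i j)"
  unfolding psd_def using psd_on_hermitian[of UNIV A i j] by simp

lemma psd_diag_nonneg: "psd (A :: ('i::finite) op) \<Longrightarrow> Re (A i i) \<ge> 0"
  unfolding psd_def using psd_on_diag(2)[of UNIV A i] by simp

lemma psd_Re_tr_nonneg: "psd (A :: ('i::finite) op) \<Longrightarrow> Re (tr A) \<ge> 0"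
  unfolding tr_def by (auto intro: sum_nonneg psd_diag_nonneg)

lemma psd_Re_tr_mmult_nonneg:
  fixes A B :: "('a::finite) op"
  assumes "psd A" "psd B"
  shows "Re (tr (mmult A B)) \<ge> 0"
  using psd_on_trace_mult_nonneg[of UNIV A B] assms unfolding psd_def tr_def mmult_def by simp

lemma tr_choi:
  fixes \<Gamma> :: "('a::finite) op \<Rightarrow> ('b::finite) op"
  assumes "trace_preserving \<Gamma>"
  shows "tr (choi \<Gamma>) = of_nat CARD('a)"
proof -
  have "tr (choi \<Gamma>) = (\<Sum>a\<in>UNIV. \<Sum>b\<in>UNIV. choi \<Gamma> (a, b) (a, b))"
    unfolding tr_def by (simp add: UNIV_Times_UNIV[symmetric] sum.cartesian_product del: UNIV_Times_UNIV)
  also have "\<dots> = (\<Sum>a\<in>UNIV. tr (\<Gamma> (matrix_unit a a)))"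
    by (simp add: tr_def choi_apply)
  also have "\<dots> = (\<Sum>a\<in>(UNIV::'a set). tr (matrix_unit a a))"
    using assms by (simp add: trace_preserving_def)
  also have "\<dots> = (\<Sum>a\<in>(UNIV::'a set). 1)"
    unfolding tr_def matrix_unit_def by simp
  finally show ?thesis by simp
qed

lemma p_succ_nonneg:
  assumes "\<Gamma> \<in> channels" "T \<in> tasks"
  shows "p_succ \<Gamma> T \<ge> 0"
proof -
  obtain m p \<eta> M where T: "T = (m, p, \<eta>, M)" by (cases T) auto
  have "\<forall>i<m. 0 \<le> p i" "\<forall>i<m. psd (\<eta> i)" "\<forall>i<m. psd (M i)"
    using assms(2) unfolding T tasks_def is_state_def by auto
  then show ?thesis unfolding T p_succ_def
    by (auto intro!: sum_nonneg mult_nonneg_nonneg psd_Re_tr_mmult_nonneg psd_id_tensor_channel[OF assms(1)])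
qed

lemma p_succ_mixture:
  fixes s :: real
  assumes "s \<ge> 0"
  shows "p_succ (\<lambda>X i j. (\<Lambda> X i j + of_real s * \<Theta> X i j) / of_real (1 + s)) T
     = (p_succ \<Lambda> T + s * p_succ \<Theta> T) / (1 + s)"
proof -
  obtain m p \<eta> M where T: "T = (m, p, \<eta>, M)" by (cases T) auto
  have id_tensor: "id_tensor (\<lambda>X i j. (\<Lambda> X i j + of_real s * \<Theta> X i j) / of_real (1 + s)) Y
      = (\<lambda>x y. (id_tensor \<Lambda> Y x y + of_real s * id_tensor \<Theta> Y x y) / of_real (1 + s))" for Y
    unfolding id_tensor_def by (auto intro!: ext)
  have tr: "tr (mmult A (\<lambda>x y. (B x y + of_real s * C x y) / of_real (1 + s)))
        = (tr (mmult A B) + of_real s * tr (mmult A C)) / of_real (1 + s)" for A B C :: "('c::finite) op"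
    unfolding tr_def mmult_def
    by (simp add: sum_divide_distrib sum_distrib_left sum.distrib algebra_simps add_divide_distrib)
  show ?thesis
    unfolding T p_succ_def id_tensor tr using assms
    by (simp add: Re_divide_of_real sum_divide_distrib sum_distrib_left sum.distrib algebra_simps add_divide_distrib)
qed

lemma psd_norm_le:
  fixes A :: "('i::finite) op"
  assumes "psd A"
  shows "(cmod (A p q))\<^sup>2 \<le> Re (A p p) * Re (A q q)"
proof (cases "A p p = 0")
  case True
  then show ?thesis
    using psd_on_zero_diag_row[of UNIV A p q] psd_diag_nonneg[OF assms] assms unfolding psd_def by simp
next
  case False
  have "psd (\<lambda>x y. A x y - A x p * A p y / A p p)"
    using psd_on_schur_complement[of UNIV A p] assms False unfolding psd_def by simp
  then have d: "Re (A q q - A q p * A p q / A p p) \<ge> 0" by (rule psd_diag_nonneg)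
  define r where "r = Re (A p p)"
  have r: "A p p = of_real r" "r > 0"
    using psd_on_diag[of UNIV A p] assms False unfolding psd_def by (auto simp: r_def complex_eq_iff)
  have "A q p * A p q = of_real ((cmod (A p q))\<^sup>2)"
    using psd_hermitian[OF assms, of q p] complex_norm_square[of "A p q"] by (simp add: mult.commute)
  then have "Re (A q q) - (cmod (A p q))\<^sup>2 / r \<ge> 0" using d r by simp
  then show ?thesis using r by (simp add: field_simps)
qed

lemma psd_diag_le_tr:
  fixes A :: "('i::finite) op"
  assumes "psd A"
  shows "Re (A p p) \<le> Re (tr A)"
  unfolding tr_def Re_sum by (rule member_le_sum) (auto intro: psd_diag_nonneg[OF assms])

lemma channel_choi_norm_le:
  fixes \<Gamma> :: "('a::finite) op \<Rightarrow> ('b::finite) op"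
  assumes "\<Gamma> \<in> channels"
  shows "cmod (choi \<Gamma> p q) \<le> real CARD('a)"
proof -
  let ?J = "choi \<Gamma>"
  have J: "psd ?J" by (rule psd_choi_channel[OF assms])
  have trJ: "Re (tr ?J) = real CARD('a)" using tr_choi[of \<Gamma>] assms by (simp add: channels_def)
  have "(cmod (?J p q))\<^sup>2 \<le> Re (?J p p) * Re (?J q q)" by (rule psd_norm_le[OF J])
  also have "\<dots> \<le> real CARD('a) * real CARD('a)"
    using psd_diag_le_tr[OF J] psd_diag_nonneg[OF J] trJ by (intro mult_mono) auto
  finally have "(cmod (?J p q))\<^sup>2 \<le> (real CARD('a))\<^sup>2" by (simp add: power2_eq_square)
  then show ?thesis by (rule power2_le_imp_le) simp
qed

definition max_entangled_state :: "('a::finite \<times> 'a) op" where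
  "max_entangled_state = (\<lambda>x y. max_entangled x y / of_nat CARD('a))"

lemma tr_max_entangled: "tr (max_entangled :: ('a::finite \<times> 'a) op) = of_nat CARD('a)"
proof -
  have "tr (max_entangled :: ('a \<times> 'a) op) = (\<Sum>p\<in>(UNIV :: ('a \<times> 'a) set). of_bool (fst p = snd p))"
    unfolding tr_def max_entangled_def by (intro sum.cong refl) (auto split: prod.splits)
  also have "\<dots> = of_nat (card {p :: 'a \<times> 'a. fst p = snd p})"
    by (simp add: of_bool_def sum.If_cases)
  also have "{p :: 'a \<times> 'a. fst p = snd p} = (\<lambda>a. (a, a)) ` UNIV" by auto
  also have "card ((\<lambda>a::'a. (a, a)) ` UNIV) = CARD('a)" by (rule card_image) (auto simp: inj_on_def)
  finally show ?thesis .
qed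

lemma is_state_max_entangled_state: "is_state (max_entangled_state :: ('a::finite \<times> 'a) op)"
proof -
  have "psd (\<lambda>x y. of_real (1 / real CARD('a)) * (max_entangled :: ('a \<times> 'a) op) x y)"
    using psd_max_entangled unfolding psd_def by (rule psd_on_scale) simp
  moreover have "tr (max_entangled_state :: ('a \<times> 'a) op) = 1"
    using tr_max_entangled[where 'a='a] unfolding max_entangled_state_def tr_def
    by (simp add: sum_divide_distrib[symmetric])
  ultimately show ?thesis unfolding is_state_def max_entangled_state_def by (simp add: field_simps)
qed

lemma id_tensor_max_entangled_state:
  fixes \<Gamma> :: "('a::finite) op \<Rightarrow> ('b::finite) op"
  assumes "is_linear_map \<Gamma>"
  shows "id_tensor \<Gamma> max_entangled_state = (\<lambda>x y. choi \<Gamma> x y / of_nat CARD('a))"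
  unfolding max_entangled_state_def by (rule id_tensor_max_entangled_scaled[OF assms])

section \<open>Operators as vectors of a Euclidean space\<close>

text \<open>Operators are embedded into the real Euclidean space complex^('i * 'i), where the separating
  hyperplane theorem is available; its inner product is the real part of the Hilbert-Schmidt
  inner product.\<close>
definition op_to_vec :: "('i::finite) op \<Rightarrow> complex^('i \<times> 'i)" where
  "op_to_vec A = (\<chi> p. A (fst p) (snd p))"

definition vec_to_op :: "complex^('i::finite \<times> 'i) \<Rightarrow> 'i op" where
  "vec_to_op x = (\<lambda>i j. x $ (i, j))"

definition psd_cone :: "(complex^('i::finite \<times> 'i)) set" where
  "psd_cone = {x. psd (vec_to_op x)}"

lemma vec_to_op_op_to_vec [simp]: "vec_to_op (op_to_vec A) = A"
  unfolding vec_to_op_def op_to_vec_def by simp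

lemma op_to_vec_in_psd_cone_iff: "op_to_vec A \<in> psd_cone \<longleftrightarrow> psd A"
  by (simp add: psd_cone_def)

lemma vec_to_op_comb:
  "vec_to_op (u *\<^sub>R x + v *\<^sub>R y) = (\<lambda>i j. of_real u * vec_to_op x i j + of_real v * vec_to_op y i j)"
  unfolding vec_to_op_def
  by (intro ext, simp only: vector_add_component vector_scaleR_component) (simp add: scaleR_conv_of_real)

lemma op_to_vec_comb:
  "op_to_vec (\<lambda>i j. of_real u * A i j + of_real v * B i j) = u *\<^sub>R op_to_vec A + v *\<^sub>R op_to_vec B"
  unfolding op_to_vec_def
  by (simp only: vec_eq_iff vector_add_component vector_scaleR_component vec_lambda_beta)
    (simp add: scaleR_conv_of_real)

lemma inner_op_to_vec:
  "inner W (op_to_vec A) = (\<Sum>i\<in>UNIV. \<Sum>j\<in>UNIV. inner (W $ (i, j)) (A i j))"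
  unfolding inner_vec_def op_to_vec_def
  by (simp add: UNIV_Times_UNIV[symmetric] sum.cartesian_product case_prod_beta del: UNIV_Times_UNIV)

lemma norm_op_to_vec_le:
  fixes A :: "('i::finite) op"
  assumes "\<And>p q. cmod (A p q) \<le> B"
  shows "norm (op_to_vec A) \<le> real CARD('i \<times> 'i) * B"
proof -
  have "norm (op_to_vec A) = L2_set (\<lambda>p. norm (op_to_vec A $ p)) UNIV" by (simp add: norm_vec_def)
  also have "\<dots> \<le> (\<Sum>p\<in>UNIV. norm (op_to_vec A $ p))" by (rule L2_set_le_sum) simp
  also have "\<dots> \<le> (\<Sum>p\<in>(UNIV :: ('i \<times> 'i) set). B)"
    by (intro sum_mono) (simp add: op_to_vec_def assms)
  finally show ?thesis by simp
qed

lemma psd_cone_nonneg_comb: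
  assumes "x \<in> psd_cone" "y \<in> psd_cone" "u \<ge> 0" "v \<ge> 0"
  shows "u *\<^sub>R x + v *\<^sub>R y \<in> psd_cone"
proof -
  have "psd (vec_to_op (u *\<^sub>R x + v *\<^sub>R y))"
    using assms unfolding psd_cone_def psd_def vec_to_op_comb by (simp add: psd_on_nonneg_comb)
  then show ?thesis by (simp add: psd_cone_def)
qed

lemma zero_in_psd_cone: "0 \<in> psd_cone"
  unfolding psd_cone_def psd_def psd_on_iff_quad_form quad_form_def vec_to_op_def by simp

lemma psd_cone_scaleR: "x \<in> psd_cone \<Longrightarrow> u \<ge> 0 \<Longrightarrow> u *\<^sub>R x \<in> psd_cone"
  using psd_cone_nonneg_comb[of x 0 u 0] zero_in_psd_cone by simp

lemma convex_psd_cone: "convex psd_cone"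
  unfolding convex_def using psd_cone_nonneg_comb by blast

lemma closed_psd_cone: "closed (psd_cone :: (complex^('i::finite \<times> 'i)) set)"
proof -
  have cont: "continuous_on UNIV (\<lambda>x :: complex^('i \<times> 'i). quad_form UNIV (vec_to_op x) w)" for w
    unfolding quad_form_def vec_to_op_def
    by (intro continuous_intros linear_continuous_on bounded_linear_vec_nth)
  have "psd_cone = (\<Inter>w. {x :: complex^('i \<times> 'i). Im (quad_form UNIV (vec_to_op x) w) = 0} \<inter>
                        {x. 0 \<le> Re (quad_form UNIV (vec_to_op x) w)})"
    unfolding psd_cone_def psd_def psd_on_iff_quad_form by auto
  also have "closed \<dots>"
    by (intro closed_INT ballI closed_Int closed_Collect_eq closed_Collect_le continuous_intros
        continuous_on_compose2[OF continuous_on_Im cont] continuous_on_compose2[OF continuous_on_Re cont]) auto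
  finally show ?thesis .
qed

definition choi_image :: "(('a::finite) op \<Rightarrow> ('b::finite) op) set \<Rightarrow> (complex^(('a \<times> 'b) \<times> ('a \<times> 'b))) set" where
  "choi_image F = (\<lambda>\<Xi>. op_to_vec (choi \<Xi>)) ` F"

lemma choi_image_subset_psd_cone: "F \<subseteq> channels \<Longrightarrow> choi_image F \<subseteq> psd_cone"
  unfolding choi_image_def using psd_choi_channel op_to_vec_in_psd_cone_iff by blast

lemma vec_to_op_scaled_diff: "vec_to_op (u *\<^sub>R x - y) = (\<lambda>i j. of_real u * vec_to_op x i j - vec_to_op y i j)"
  unfolding vec_to_op_def
  by (intro ext, simp only: vector_minus_component vector_scaleR_component) (simp add: scaleR_conv_of_real)

lemma convex_choi_image:
  assumes "convex_chans F"
  shows "convex (choi_image F)"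
  unfolding convex_def choi_image_def
proof (intro ballI allI impI)
  fix x y and u v :: real
  assume "x \<in> (\<lambda>\<Xi>. op_to_vec (choi \<Xi>)) ` F" "y \<in> (\<lambda>\<Xi>. op_to_vec (choi \<Xi>)) ` F"
    and uv: "0 \<le> u" "0 \<le> v" "u + v = 1"
  then obtain \<Xi>1 \<Xi>2 where \<Xi>: "\<Xi>1 \<in> F" "x = op_to_vec (choi \<Xi>1)" "\<Xi>2 \<in> F" "y = op_to_vec (choi \<Xi>2)"
    by blast
  have "v = 1 - u" using uv by simp
  have "(\<lambda>X i j. of_real u * \<Xi>1 X i j + of_real (1 - u) * \<Xi>2 X i j) \<in> F"
    using assms \<Xi>(1,3) uv \<open>v = 1 - u\<close> unfolding convex_chans_def by simp
  then have "(\<lambda>X i j. of_real u * \<Xi>1 X i j + of_real v * \<Xi>2 X i j) \<in> F"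
    unfolding \<open>v = 1 - u\<close> .
  moreover have "u *\<^sub>R x + v *\<^sub>R y = op_to_vec (choi (\<lambda>X i j. of_real u * \<Xi>1 X i j + of_real v * \<Xi>2 X i j))"
    by (simp only: choi_comb op_to_vec_comb \<Xi>(2,4))
  ultimately show "u *\<^sub>R x + v *\<^sub>R y \<in> (\<lambda>\<Xi>. op_to_vec (choi \<Xi>)) ` F" by blast
qed

lemma bounded_choi_image:
  fixes F :: "(('a::finite) op \<Rightarrow> ('b::finite) op) set"
  assumes "F \<subseteq> channels"
  shows "bounded (choi_image F)"
  unfolding bounded_iff choi_image_def
proof (intro exI ballI)
  fix x assume "x \<in> (\<lambda>\<Xi>. op_to_vec (choi \<Xi>)) ` F"
  then obtain \<Xi> where "\<Xi> \<in> channels" "x = op_to_vec (choi \<Xi>)" using assms by blast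
  then show "norm x \<le> real CARD(('a \<times> 'b) \<times> ('a \<times> 'b)) * real CARD('a)"
    using norm_op_to_vec_le[of "choi \<Xi>"] channel_choi_norm_le[of \<Xi>] by simp
qed

section \<open>Tasks from the dual cone\<close>

lemma quad_form_hermitian_real:
  assumes "\<And>i j. A j i = cnj (A i j)"
  shows "Im (quad_form UNIV A v) = 0"
proof -
  have "cnj (quad_form UNIV A v) = (\<Sum>i\<in>UNIV. \<Sum>j\<in>UNIV. v i * A j i * cnj (v j))"
  proof -
    have "cnj (A i j) = A j i" for i j using assms by (metis complex_cnj_cnj)
    then show ?thesis unfolding quad_form_def cnj_sum by simp
  qed
  also have "\<dots> = quad_form UNIV A v"
    unfolding quad_form_def by (subst sum.swap) (simp add: mult_ac)
  finally show ?thesis by (metis Reals_cnj_iff complex_is_Real_iff)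
qed

lemma Re_quad_form_le:
  fixes H :: "('i::finite) op"
  shows "Re (quad_form UNIV H v) \<le> (\<Sum>i\<in>UNIV. \<Sum>j\<in>UNIV. cmod (H i j)) * (\<Sum>k\<in>UNIV. (cmod (v k))\<^sup>2)"
proof -
  let ?N = "\<Sum>k\<in>UNIV. (cmod (v k))\<^sup>2"
  have product: "cmod (v i) * cmod (v j) \<le> ?N" for i j
  proof -
    have "(cmod (v i))\<^sup>2 \<le> ?N" "(cmod (v j))\<^sup>2 \<le> ?N" by (auto intro: member_le_sum)
    moreover have "2 * (cmod (v i) * cmod (v j)) \<le> (cmod (v i))\<^sup>2 + (cmod (v j))\<^sup>2"
      using sum_squares_bound[of "cmod (v i)" "cmod (v j)"] by (simp add: power2_eq_square)
    ultimately show ?thesis by linarith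
  qed
  have entry: "cmod (cnj (v i) * H i j * v j) \<le> cmod (H i j) * ?N" for i j
  proof -
    have "cmod (cnj (v i) * H i j * v j) = cmod (H i j) * (cmod (v i) * cmod (v j))"
      by (simp add: norm_mult)
    then show ?thesis using product[of i j] by (simp add: mult_left_mono)
  qed
  have "Re (quad_form UNIV H v) \<le> cmod (quad_form UNIV H v)" by (rule complex_Re_le_cmod)
  also have "\<dots> \<le> (\<Sum>i\<in>UNIV. \<Sum>j\<in>UNIV. cmod (cnj (v i) * H i j * v j))"
    unfolding quad_form_def by (rule order_trans[OF norm_sum sum_mono]) (rule norm_sum)
  also have "\<dots> \<le> (\<Sum>i\<in>UNIV. \<Sum>j\<in>UNIV. cmod (H i j) * ?N)"
    by (intro sum_mono entry)
  finally show ?thesis by (simp add: sum_distrib_right)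
qed

lemma psd_idop_minus_scaled:
  fixes H :: "('i::finite) op"
  assumes herm: "\<And>i j. H j i = cnj (H i j)" and c: "c > 0" "(\<Sum>i\<in>UNIV. \<Sum>j\<in>UNIV. cmod (H i j)) \<le> c"
  shows "psd (\<lambda>i j. idop i j - H i j / of_real c)"
  unfolding psd_def psd_on_iff_quad_form
proof
  fix v :: "'i \<Rightarrow> complex"
  define N where "N = (\<Sum>k\<in>UNIV. (cmod (v k))\<^sup>2)"
  have "quad_form UNIV idop v = (\<Sum>i\<in>UNIV. cnj (v i) * v i)"
    unfolding quad_form_def idop_def by (simp add: if_distrib[of "times _"] if_distrib[of "\<lambda>a. a * _"] cong: if_cong)
  also have "\<dots> = of_real N"
    unfolding N_def of_real_sum complex_norm_square by (simp add: mult.commute)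
  finally have "quad_form UNIV (\<lambda>i j. idop i j - H i j / of_real c) v = of_real N - quad_form UNIV H v / of_real c"
    unfolding quad_form_def by (simp add: algebra_simps sum_subtractf sum_divide_distrib)
  moreover have "Re (quad_form UNIV H v) \<le> c * N"
    using Re_quad_form_le[where H = H and v = v] c mult_right_mono[OF c(2), of N] unfolding N_def
    by (simp add: sum_nonneg)
  ultimately show "Im (quad_form UNIV (\<lambda>i j. idop i j - H i j / of_real c) v) = 0 \<and>
      0 \<le> Re (quad_form UNIV (\<lambda>i j. idop i j - H i j / of_real c) v)"
    using quad_form_hermitian_real[OF herm, where v = v] c
    by (simp add: Re_divide_of_real Im_divide_of_real pos_divide_le_eq mult.commute)
qed

definition herm_part :: "complex^('i::finite \<times> 'i) \<Rightarrow> 'i op" where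
  "herm_part W = (\<lambda>i j. (cnj (W $ (j, i)) + W $ (i, j)) / 2)"

lemma herm_part_hermitian: "herm_part W j i = cnj (herm_part W i j)"
  unfolding herm_part_def by (simp add: add.commute)

lemma Re_trace_herm_part:
  assumes herm: "\<And>i j. A j i = cnj (A i j)"
  shows "Re (\<Sum>i\<in>UNIV. \<Sum>j\<in>UNIV. herm_part W i j * A j i) = inner W (op_to_vec A)"
proof -
  have "Re (herm_part W i j * A j i) = (inner (W $ (j, i)) (A j i) + inner (W $ (i, j)) (A i j)) / 2" for i j
    unfolding herm_part_def herm[of i j] by (simp add: inner_complex_def algebra_simps)
  then have "Re (\<Sum>i\<in>UNIV. \<Sum>j\<in>UNIV. herm_part W i j * A j i) =
      ((\<Sum>i\<in>UNIV. \<Sum>j\<in>UNIV. inner (W $ (j, i)) (A j i)) + (\<Sum>i\<in>UNIV. \<Sum>j\<in>UNIV. inner (W $ (i, j)) (A i j))) / 2"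
    by (simp add: sum.distrib add_divide_distrib sum_divide_distrib)
  also have "(\<Sum>i\<in>UNIV. \<Sum>j\<in>UNIV. inner (W $ (j, i)) (A j i)) = (\<Sum>i\<in>UNIV. \<Sum>j\<in>UNIV. inner (W $ (i, j)) (A i j))"
    by (rule sum.swap)
  finally show ?thesis unfolding inner_op_to_vec by simp
qed

lemma psd_herm_part:
  fixes W :: "complex^('i::finite \<times> 'i)"
  assumes dual: "\<forall>x\<in>psd_cone. inner W x \<ge> 0"
  shows "psd (herm_part W)"
  unfolding psd_def psd_on_iff_quad_form
proof
  fix v :: "'i \<Rightarrow> complex"
  have "Re (quad_form UNIV (herm_part W) v) = Re (\<Sum>i\<in>UNIV. \<Sum>j\<in>UNIV. herm_part W i j * (v j * cnj (v i)))"
    unfolding quad_form_def by (simp add: mult_ac)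
  also have "\<dots> = inner W (op_to_vec (\<lambda>a b. v a * cnj (v b)))"
    by (rule Re_trace_herm_part) simp
  also have "\<dots> \<ge> 0"
    using dual psd_on_outer[of UNIV v] by (simp add: op_to_vec_in_psd_cone_iff psd_def)
  finally show "Im (quad_form UNIV (herm_part W) v) = 0 \<and> 0 \<le> Re (quad_form UNIV (herm_part W) v)"
    using quad_form_hermitian_real[OF herm_part_hermitian] by simp
qed

definition binary_task :: "('a \<times> 'a) op \<Rightarrow> ('a \<times> 'b) op \<Rightarrow>
    nat \<times> (nat \<Rightarrow> real) \<times> (nat \<Rightarrow> ('a \<times> 'a) op) \<times> (nat \<Rightarrow> ('a \<times> 'b) op)" where
  "binary_task \<rho> M = (2, \<lambda>i. of_bool (i = 0), \<lambda>_. \<rho>, \<lambda>i. if i = 0 then M else (\<lambda>x y. idop x y - M x y))"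

lemma binary_task_in_tasks:
  assumes "is_state \<rho>" "psd M" "psd (\<lambda>x y. idop x y - M x y)"
  shows "binary_task \<rho> M \<in> tasks"
  using assms by (simp add: binary_task_def tasks_def numeral_2_eq_2 lessThan_Suc less_Suc_eq)

lemma p_succ_binary_task: "p_succ \<Gamma> (binary_task \<rho> M) = Re (tr (mmult M (id_tensor \<Gamma> \<rho>)))"
  by (simp add: binary_task_def p_succ_def numeral_2_eq_2 lessThan_Suc)

lemma task_from_dual_vector:
  fixes W :: "complex^(('a::finite \<times> 'b::finite) \<times> ('a \<times> 'b))"
  assumes dual: "\<forall>x\<in>psd_cone. inner W x \<ge> 0"
  obtains T \<kappa> where "T \<in> tasks" "\<kappa> > 0"
    "\<And>\<Gamma> :: 'a op \<Rightarrow> 'b op. \<Gamma> \<in> channels \<Longrightarrow> p_succ \<Gamma> T = \<kappa> * inner W (op_to_vec (choi \<Gamma>))"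
proof
  let ?H = "herm_part W"
  define c where "c = 1 + (\<Sum>i\<in>UNIV. \<Sum>j\<in>UNIV. cmod (?H i j))"
  have c: "c > 0" unfolding c_def by (simp add: add_pos_nonneg sum_nonneg)
  define M where "M = (\<lambda>i j. ?H i j / of_real c)"
  have "psd M"
    using psd_on_scale[of UNIV ?H "1 / c"] psd_herm_part[OF dual] c unfolding psd_def M_def
    by (simp add: divide_inverse mult.commute)
  moreover have "psd (\<lambda>i j. idop i j - M i j)"
    unfolding M_def using c by (intro psd_idop_minus_scaled herm_part_hermitian) (auto simp: c_def)
  ultimately show "binary_task max_entangled_state M \<in> tasks"
    by (simp add: binary_task_in_tasks is_state_max_entangled_state)
  show "1 / (c * real CARD('a)) > 0" using c by simp
  fix \<Gamma> :: "'a op \<Rightarrow> 'b op"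
  assume \<Gamma>: "\<Gamma> \<in> channels"
  have "tr (mmult M (id_tensor \<Gamma> max_entangled_state)) =
      (\<Sum>i\<in>UNIV. \<Sum>k\<in>UNIV. ?H i k * choi \<Gamma> k i) / of_real (c * real CARD('a))"
    using \<Gamma> unfolding channels_def
    by (simp add: id_tensor_max_entangled_state tr_def mmult_def M_def sum_divide_distrib)
  also have "Re \<dots> = inner W (op_to_vec (choi \<Gamma>)) / (c * real CARD('a))"
    unfolding Re_divide_of_real Re_trace_herm_part[OF psd_hermitian[OF psd_choi_channel[OF \<Gamma>]]] ..
  finally show "p_succ \<Gamma> (binary_task max_entangled_state M) =
      1 / (c * real CARD('a)) * inner W (op_to_vec (choi \<Gamma>))"
    unfolding p_succ_binary_task by simp
qed

section \<open>Generalized robustness\<close>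

lemma robustness_le:
  assumes "s \<ge> 0" "\<Theta> \<in> channels" "(\<lambda>X i j. (\<Lambda> X i j + of_real s * \<Theta> X i j) / of_real (1 + s)) \<in> G"
  shows "robustness G \<Lambda> \<le> ereal s"
  unfolding robustness_def using assms by (intro Inf_lower) blast

lemma robustness_nonneg: "robustness G \<Lambda> \<ge> 0"
  unfolding robustness_def by (rule Inf_greatest) auto

lemma robustness_antimono: "G \<subseteq> G' \<Longrightarrow> robustness G' \<Lambda> \<le> robustness G \<Lambda>"
  unfolding robustness_def by (rule Inf_superset_mono) blast

lemma robustness_Union: "robustness (\<Union>k. F k) \<Lambda> = (INF k. robustness (F k) \<Lambda>)"
proof (rule antisym)
  show "robustness (\<Union>k. F k) \<Lambda> \<le> (INF k. robustness (F k) \<Lambda>)"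
    by (rule INF_greatest, rule robustness_antimono) blast
  show "(INF k. robustness (F k) \<Lambda>) \<le> robustness (\<Union>k. F k) \<Lambda>"
    unfolding robustness_def [of "\<Union>k. F k"]
  proof (rule Inf_greatest)
    fix r assume "r \<in> {ereal s | s. 0 \<le> s \<and> (\<exists>\<Theta>\<in>channels.
      (\<lambda>X i j. (\<Lambda> X i j + of_real s * \<Theta> X i j) / of_real (1 + s)) \<in> (\<Union>k. F k))}"
    then obtain s \<Theta> k where "r = ereal s" "s \<ge> 0" "\<Theta> \<in> channels"
        "(\<lambda>X i j. (\<Lambda> X i j + of_real s * \<Theta> X i j) / of_real (1 + s)) \<in> F k"
      by blast
    then have "robustness (F k) \<Lambda> \<le> r" using robustness_le by blast
    then show "(INF k. robustness (F k) \<Lambda>) \<le> r" by (rule INF_lower2[OF UNIV_I])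
  qed
qed

lemma one_le_of_psd_choi_dominance:
  fixes \<Xi> \<Lambda> :: "('a::finite) op \<Rightarrow> ('b::finite) op"
  assumes "\<Xi> \<in> channels" "\<Lambda> \<in> channels" "psd (\<lambda>p q. of_real t * choi \<Xi> p q - choi \<Lambda> p q)"
  shows "t \<ge> 1"
proof -
  have "tr (\<lambda>p q. of_real t * choi \<Xi> p q - choi \<Lambda> p q) = of_real t * tr (choi \<Xi>) - tr (choi \<Lambda>)"
    unfolding tr_def by (simp add: sum_subtractf sum_distrib_left)
  also have "\<dots> = of_real ((t - 1) * real CARD('a))"
    using assms(1,2) unfolding channels_def by (simp add: tr_choi algebra_simps)
  finally have "tr (\<lambda>p q. of_real t * choi \<Xi> p q - choi \<Lambda> p q) = of_real ((t - 1) * real CARD('a))" .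
  then show ?thesis
    using psd_Re_tr_nonneg[OF assms(3)] by (simp add: zero_le_mult_iff)
qed

text \<open>The channel is (t \<Xi> - \<Lambda>) / (t - 1).\<close>
lemma channel_mixture_of_psd_choi_dominance:
  fixes \<Xi> \<Lambda> :: "('a::finite) op \<Rightarrow> ('b::finite) op"
  assumes X: "\<Xi> \<in> channels" and L: "\<Lambda> \<in> channels" and t: "t > 1"
    and P: "psd (\<lambda>p q. of_real t * choi \<Xi> p q - choi \<Lambda> p q)"
  obtains \<Theta> where "\<Theta> \<in> channels"
    "(\<lambda>X i j. (\<Lambda> X i j + of_real (t - 1) * \<Theta> X i j) / of_real (1 + (t - 1))) = \<Xi>"
proof
  define \<Theta> where "\<Theta> = (\<lambda>X i j. (of_real t * \<Xi> X i j - \<Lambda> X i j) / of_real (t - 1))"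
  have s0: "t - 1 > 0" using t by simp
  have lin: "is_linear_map \<Xi>" "is_linear_map \<Lambda>" and tp: "trace_preserving \<Xi>" "trace_preserving \<Lambda>"
    using X L by (auto simp: channels_def)
  have "is_linear_map \<Theta>"
    unfolding is_linear_map_def \<Theta>_def linear_map_comb[OF lin(1)] linear_map_comb[OF lin(2)]
    using s0 by (intro allI ext) (simp add: ring_distribs diff_divide_distrib add_divide_distrib mult.left_commute)
  moreover have "trace_preserving \<Theta>"
    unfolding trace_preserving_def
  proof
    fix X
    have "tr (\<Theta> X) = (of_real t * tr (\<Xi> X) - tr (\<Lambda> X)) / of_real (t - 1)"
      unfolding \<Theta>_def tr_def by (simp add: sum_divide_distrib[symmetric] sum_subtractf sum_distrib_left)
    also have "\<dots> = (of_real t - 1) * tr X / of_real (t - 1)"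
      using tp by (simp add: trace_preserving_def algebra_simps)
    finally show "tr (\<Theta> X) = tr X"
      using s0 by simp
  qed
  moreover have "psd (choi \<Theta>)"
  proof -
    have "choi \<Theta> = (\<lambda>p q. of_real (1 / (t - 1)) * (of_real t * choi \<Xi> p q - choi \<Lambda> p q))"
      unfolding \<Theta>_def by (intro ext) (auto simp: choi_apply split: prod.splits)
    moreover have "psd_on UNIV (\<lambda>p q. of_real (1 / (t - 1)) * (of_real t * choi \<Xi> p q - choi \<Lambda> p q))"
      using P s0 unfolding psd_def by (intro psd_on_scale) auto
    ultimately show ?thesis unfolding psd_def by (simp only:)
  qed
  ultimately show "\<Theta> \<in> channels"
    unfolding channels_def using completely_positive_iff_psd_choi by blast
  show "(\<lambda>X i j. (\<Lambda> X i j + of_real (t - 1) * \<Theta> X i j) / of_real (1 + (t - 1))) = \<Xi>"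
    using s0 t by (intro ext) (simp add: \<Theta>_def field_simps)
qed

lemma one_plus_robustness_le_of_psd_choi_dominance:
  fixes \<Xi> \<Lambda> :: "('a::finite) op \<Rightarrow> ('b::finite) op"
  assumes "\<Xi> \<in> G" "G \<subseteq> channels" "\<Lambda> \<in> channels"
    and P: "psd (\<lambda>p q. of_real t * choi \<Xi> p q - choi \<Lambda> p q)"
  shows "1 + robustness G \<Lambda> \<le> ereal t"
proof (rule dense_ge)
  fix y assume "ereal t < y"
  show "1 + robustness G \<Lambda> \<le> y"
  proof (cases y)
    case (real t')
    have X: "\<Xi> \<in> channels" using assms(1,2) by blast
    have "t \<ge> 1" by (rule one_le_of_psd_choi_dominance[OF X assms(3) P])
    then have t': "t' > 1" "t' > t" using \<open>ereal t < y\<close> real by auto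
    have "psd_on UNIV
        (\<lambda>p q. of_real (t' - t) * choi \<Xi> p q + of_real 1 * (of_real t * choi \<Xi> p q - choi \<Lambda> p q))"
      using psd_choi_channel[OF X] P t' unfolding psd_def by (intro psd_on_nonneg_comb) auto
    moreover have "(\<lambda>p q. of_real (t' - t) * choi \<Xi> p q + of_real 1 * (of_real t * choi \<Xi> p q - choi \<Lambda> p q)) =
        (\<lambda>p q. of_real t' * choi \<Xi> p q - choi \<Lambda> p q)"
      by (intro ext) (simp add: algebra_simps)
    ultimately have "psd (\<lambda>p q. of_real t' * choi \<Xi> p q - choi \<Lambda> p q)"
      unfolding psd_def by simp
    then obtain \<Theta> where "\<Theta> \<in> channels"
        "(\<lambda>X i j. (\<Lambda> X i j + of_real (t' - 1) * \<Theta> X i j) / of_real (1 + (t' - 1))) = \<Xi>"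
      using channel_mixture_of_psd_choi_dominance[OF X assms(3) t'(1)] by blast
    then have "robustness G \<Lambda> \<le> ereal (t' - 1)"
      using t' assms(1) by (intro robustness_le) auto
    then show ?thesis
      using real add_left_mono[of "robustness G \<Lambda>" "ereal (t' - 1)" 1] by simp
  qed (use \<open>ereal t < y\<close> in auto)
qed

lemma inner_nonpos_of_cone_separation:
  fixes a :: "'v::real_inner"
  assumes sep: "\<forall>x\<in>C. inner a x < b" and cone: "\<And>x u. x \<in> C \<Longrightarrow> u \<ge> 0 \<Longrightarrow> u *\<^sub>R x \<in> C"
    and "x \<in> C"
  shows "inner a x \<le> 0"
proof (rule ccontr)
  assume "\<not> inner a x \<le> 0"
  then have pos: "inner a x > 0" by simp
  have "b > 0" using sep cone[OF \<open>x \<in> C\<close>, of 0] by fastforce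
  have "(b / inner a x) *\<^sub>R x \<in> C" using cone[OF \<open>x \<in> C\<close>] \<open>b > 0\<close> pos by simp
  then have "inner a ((b / inner a x) *\<^sub>R x) < b" using sep by blast
  then show False using pos by simp
qed

text \<open>A point of the closure of the Choi image of F whose t-fold multiple dominates J(\<Lambda>) would,
  after shrinking towards a relative interior point, give a channel in F whose Choi matrix is
  dominated with a factor t' < 1 + R.\<close>
lemma scaled_choi_closure_minus_not_psd:
  fixes F :: "(('a::finite) op \<Rightarrow> ('b::finite) op) set"
  assumes F: "F \<subseteq> channels" "F \<noteq> {}" "convex_chans F" and L: "\<Lambda> \<in> channels"
    and t: "t > 0" "ereal t < 1 + robustness F \<Lambda>" and z: "z \<in> closure (choi_image F)"
  shows "t *\<^sub>R z - op_to_vec (choi \<Lambda>) \<notin> psd_cone"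
proof
  assume zP: "t *\<^sub>R z - op_to_vec (choi \<Lambda>) \<in> psd_cone"
  obtain w where w: "ereal t < w" "w < 1 + robustness F \<Lambda>" using dense[OF t(2)] by blast
  then obtain t' where t': "w = ereal t'" by (cases w) auto
  have "t < t'" using w t' by simp
  let ?K = "choi_image F"
  have cK: "convex ?K" by (rule convex_choi_image[OF F(3)])
  obtain y where y: "y \<in> rel_interior ?K"
    using rel_interior_eq_empty[OF cK] F(2) by (auto simp: choi_image_def)
  then have yP: "y \<in> psd_cone" using choi_image_subset_psd_cone[OF F(1)] rel_interior_subset by blast
  define \<epsilon> where "\<epsilon> = 1 - t / t'"
  have \<epsilon>: "0 < \<epsilon>" "\<epsilon> \<le> 1" "t' * \<epsilon> = t' - t" using t \<open>t < t'\<close> by (auto simp: \<epsilon>_def field_simps)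
  have "z - \<epsilon> *\<^sub>R (z - y) \<in> ?K"
    using rel_interior_closure_convex_shrink[OF cK y z \<epsilon>(1,2)] rel_interior_subset by blast
  then obtain \<Xi> where \<Xi>: "\<Xi> \<in> F" "op_to_vec (choi \<Xi>) = z - \<epsilon> *\<^sub>R (z - y)"
    unfolding choi_image_def by auto
  have "t' *\<^sub>R op_to_vec (choi \<Xi>) - op_to_vec (choi \<Lambda>) =
      1 *\<^sub>R (t *\<^sub>R z - op_to_vec (choi \<Lambda>)) + (t' - t) *\<^sub>R y"
    unfolding \<Xi>(2) scaleR_diff_right scaleR_scaleR \<epsilon>(3) by (simp add: algebra_simps)
  also have "\<dots> \<in> psd_cone" using psd_cone_nonneg_comb[OF zP yP, of 1 "t' - t"] \<open>t < t'\<close> by simp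
  finally have "psd (\<lambda>p q. of_real t' * choi \<Xi> p q - choi \<Lambda> p q)"
    unfolding psd_cone_def by (simp add: vec_to_op_scaled_diff)
  then have "1 + robustness F \<Lambda> \<le> ereal t'"
    using one_plus_robustness_le_of_psd_choi_dominance[OF \<Xi>(1) F(1) L] by blast
  then show False using w t' by simp
qed

lemma exists_task_separating:
  fixes F :: "(('a::finite) op \<Rightarrow> ('b::finite) op) set"
  assumes F: "F \<subseteq> channels" "F \<noteq> {}" "convex_chans F" and L: "\<Lambda> \<in> channels"
    and t: "t > 0" "ereal t < 1 + robustness F \<Lambda>"
  obtains T where "T \<in> tasks" "\<forall>\<Xi>\<in>F. t * p_succ \<Xi> T < p_succ \<Lambda> T"
proof -
  let ?J\<Lambda> = "op_to_vec (choi \<Lambda>)"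
  define S where "S = (\<lambda>z. - ?J\<Lambda> + t *\<^sub>R z) ` closure (choi_image F)"
  have "convex S" unfolding S_def by (intro convex_affinity convex_closure convex_choi_image F(3))
  moreover have "compact S"
    unfolding S_def by (intro compact_affinity) (simp add: bounded_choi_image[OF F(1)])
  moreover have "S \<noteq> {}"
    using F(2) closure_subset[of "choi_image F"] unfolding S_def choi_image_def by auto
  moreover have "psd_cone \<inter> S = {}"
  proof -
    have "- ?J\<Lambda> + t *\<^sub>R z \<notin> psd_cone" if "z \<in> closure (choi_image F)" for z
      using scaled_choi_closure_minus_not_psd[OF F L t that] by (simp add: add.commute)
    then show ?thesis unfolding S_def by blast
  qed
  ultimately obtain a b where ab: "\<forall>x\<in>psd_cone. inner a x < b" "\<forall>x\<in>S. inner a x > b"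
    using separating_hyperplane_closed_compact[OF convex_psd_cone closed_psd_cone] by blast
  have b: "b > 0" using ab(1) zero_in_psd_cone by fastforce
  have "\<forall>x\<in>psd_cone. inner (- a) x \<ge> 0"
    using inner_nonpos_of_cone_separation[OF ab(1)] psd_cone_scaleR by fastforce
  then obtain T \<kappa> where T: "T \<in> tasks" "\<kappa> > 0"
    and p: "\<And>\<Gamma> :: 'a op \<Rightarrow> 'b op. \<Gamma> \<in> channels \<Longrightarrow> p_succ \<Gamma> T = \<kappa> * inner (- a) (op_to_vec (choi \<Gamma>))"
    by (rule task_from_dual_vector) blast
  have "t * p_succ \<Xi> T < p_succ \<Lambda> T" if "\<Xi> \<in> F" for \<Xi>
  proof -
    have "- ?J\<Lambda> + t *\<^sub>R op_to_vec (choi \<Xi>) \<in> S"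
      using that closure_subset[of "choi_image F"] unfolding S_def choi_image_def by blast
    then have "b < inner a (- ?J\<Lambda> + t *\<^sub>R op_to_vec (choi \<Xi>))" using ab(2) by blast
    then have "t * inner (- a) (op_to_vec (choi \<Xi>)) < inner (- a) ?J\<Lambda>"
      using b by (simp add: inner_diff_right)
    then show ?thesis
      using p[OF L] p[of \<Xi>] that F(1) T(2) by (auto simp: mult.left_commute)
  qed
  then show ?thesis using T(1) that by blast
qed

lemma ereal_divide_le_of_le_mult:
  assumes "0 \<le> x" "0 < c" "ereal x \<le> ereal c * D"
  shows "ereal x / D \<le> ereal c"
proof (cases D)
  case (real r)
  show ?thesis
  proof (cases "r > 0")
    case True
    then show ?thesis using assms real by (simp add: divide_le_eq mult.commute)
  next
    case False
    then have "c * r \<le> 0" using assms(2) by (simp add: mult_le_0_iff)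
    then have "x = 0" using assms real by simp
    then show ?thesis using assms(2) by (simp add: zero_ereal_def[symmetric])
  qed
qed (use assms in auto)

lemma le_ereal_divide_of_mult_le:
  assumes "0 < x" "0 < c" "0 \<le> D" "ereal c * D \<le> ereal x"
  shows "ereal c \<le> ereal x / D"
proof (cases D)
  case (real r)
  show ?thesis
  proof (cases "r = 0")
    case True
    then show ?thesis using assms real by (simp add: divide_ereal_def zero_ereal_def[symmetric])
  next
    case False
    then show ?thesis using assms real by (simp add: le_divide_eq mult.commute)
  qed
qed (use assms in auto)

lemma le_one_plus_robustness:
  assumes "\<And>s \<Theta>. s \<ge> 0 \<Longrightarrow> \<Theta> \<in> channels \<Longrightarrow>
      (\<lambda>X i j. (\<Lambda> X i j + of_real s * \<Theta> X i j) / of_real (1 + s)) \<in> G \<Longrightarrow> x \<le> 1 + ereal s"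
  shows "x \<le> 1 + robustness G \<Lambda>"
proof -
  define S where "S = {s. 0 \<le> s \<and> (\<exists>\<Theta>\<in>channels.
      (\<lambda>X i j. (\<Lambda> X i j + of_real s * \<Theta> X i j) / of_real (1 + s)) \<in> G)}"
  have R: "robustness G \<Lambda> = (INF s\<in>S. ereal s)"
    unfolding robustness_def S_def by (rule arg_cong[where f = Inf]) auto
  show ?thesis
  proof (cases "S = {}")
    case True
    then show ?thesis unfolding R by (simp add: top_ereal_def)
  next
    case False
    have "x \<le> (INF s\<in>S. 1 + ereal s)" using assms by (intro INF_greatest) (auto simp: S_def)
    also have "\<dots> = 1 + (INF s\<in>S. ereal s)" using False by (intro INF_ereal_add_right) (auto simp: S_def)
    finally show ?thesis unfolding R .
  qed
qed

lemma p_succ_ratio_le_mixture_weight: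
  assumes L: "\<Lambda> \<in> channels" and "\<Theta> \<in> channels" "s \<ge> 0"
    and mix: "(\<lambda>X i j. (\<Lambda> X i j + of_real s * \<Theta> X i j) / of_real (1 + s)) \<in> F"
    and T: "T \<in> tasks"
  shows "ereal (p_succ \<Lambda> T) / (SUP \<Xi>\<in>F. ereal (p_succ \<Xi> T)) \<le> 1 + ereal s"
proof -
  let ?M = "\<lambda>X i j. (\<Lambda> X i j + of_real s * \<Theta> X i j) / of_real (1 + s)"
  have "p_succ \<Lambda> T \<le> p_succ \<Lambda> T + s * p_succ \<Theta> T"
    using p_succ_nonneg[OF \<open>\<Theta> \<in> channels\<close> T] \<open>s \<ge> 0\<close> by simp
  also have "\<dots> = (1 + s) * p_succ ?M T"
    unfolding p_succ_mixture[OF \<open>s \<ge> 0\<close>] using \<open>s \<ge> 0\<close> by simp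
  finally have "ereal (p_succ \<Lambda> T) \<le> ereal (1 + s) * ereal (p_succ ?M T)" by simp
  also have "\<dots> \<le> ereal (1 + s) * (SUP \<Xi>\<in>F. ereal (p_succ \<Xi> T))"
    by (rule ereal_mult_left_mono[OF SUP_upper[OF mix]]) (use \<open>s \<ge> 0\<close> in simp)
  finally have "ereal (p_succ \<Lambda> T) / (SUP \<Xi>\<in>F. ereal (p_succ \<Xi> T)) \<le> ereal (1 + s)"
    using \<open>s \<ge> 0\<close> by (intro ereal_divide_le_of_le_mult p_succ_nonneg[OF L T]) auto
  then show ?thesis by (simp add: add.commute)
qed

lemma le_p_succ_ratio:
  assumes "F \<subseteq> channels" "F \<noteq> {}" "T \<in> tasks" "t > 0" "\<forall>\<Xi>\<in>F. t * p_succ \<Xi> T < p_succ \<Lambda> T"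
  shows "ereal t \<le> ereal (p_succ \<Lambda> T) / (SUP \<Xi>\<in>F. ereal (p_succ \<Xi> T))"
proof (rule le_ereal_divide_of_mult_le)
  obtain \<Xi>0 where "\<Xi>0 \<in> F" using assms(2) by blast
  have p: "0 \<le> p_succ \<Xi>0 T" using p_succ_nonneg \<open>\<Xi>0 \<in> F\<close> assms(1,3) by blast
  show "0 < p_succ \<Lambda> T"
    using p assms(4,5) \<open>\<Xi>0 \<in> F\<close> by (smt (verit) mult_nonneg_nonneg)
  show "0 \<le> (SUP \<Xi>\<in>F. ereal (p_succ \<Xi> T))"
    using p by (intro SUP_upper2[OF \<open>\<Xi>0 \<in> F\<close>]) simp
  have "(SUP \<Xi>\<in>F. ereal (p_succ \<Xi> T)) \<le> ereal (p_succ \<Lambda> T / t)"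
    using assms(4,5) by (intro SUP_least) (auto simp: field_simps less_imp_le)
  then have "ereal t * (SUP \<Xi>\<in>F. ereal (p_succ \<Xi> T)) \<le> ereal t * ereal (p_succ \<Lambda> T / t)"
    by (rule ereal_mult_left_mono) (use assms(4) in simp)
  then show "ereal t * (SUP \<Xi>\<in>F. ereal (p_succ \<Xi> T)) \<le> ereal (p_succ \<Lambda> T)"
    using assms(4) by simp
qed (use assms in auto)

theorem SUP_p_succ_ratio_eq_one_plus_robustness:
  fixes F :: "(('a::finite) op \<Rightarrow> ('b::finite) op) set"
  assumes F: "F \<subseteq> channels" "F \<noteq> {}" "convex_chans F" and L: "\<Lambda> \<in> channels"
  shows "(SUP T\<in>tasks. ereal (p_succ \<Lambda> T) / (SUP \<Xi>\<in>F. ereal (p_succ \<Xi> T))) = 1 + robustness F \<Lambda>"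
proof (rule antisym)
  show "(SUP T\<in>tasks. ereal (p_succ \<Lambda> T) / (SUP \<Xi>\<in>F. ereal (p_succ \<Xi> T))) \<le> 1 + robustness F \<Lambda>"
    using p_succ_ratio_le_mixture_weight[OF L] by (intro SUP_least le_one_plus_robustness)
  show "1 + robustness F \<Lambda> \<le> (SUP T\<in>tasks. ereal (p_succ \<Lambda> T) / (SUP \<Xi>\<in>F. ereal (p_succ \<Xi> T)))"
  proof (rule dense_le_bounded[of 0])
    show "0 < 1 + robustness F \<Lambda>" using robustness_nonneg[of F \<Lambda>] by (cases "robustness F \<Lambda>") auto
  next
    fix w assume w: "0 < w" "w < 1 + robustness F \<Lambda>"
    then obtain t where t: "w = ereal t" "t > 0" by (cases w) auto
    obtain T where "T \<in> tasks" "\<forall>\<Xi>\<in>F. t * p_succ \<Xi> T < p_succ \<Lambda> T"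
      using exists_task_separating[OF F L t(2)] w t by blast
    then show "w \<le> (SUP T\<in>tasks. ereal (p_succ \<Lambda> T) / (SUP \<Xi>\<in>F. ereal (p_succ \<Xi> T)))"
      using le_p_succ_ratio[OF F(1,2)] t by (blast intro: SUP_upper2)
  qed
qed

theorem theorem15:
  fixes F :: "'k \<Rightarrow> (('a::finite) op \<Rightarrow> ('b::finite) op) set"
    and \<Lambda> :: "'a op \<Rightarrow> 'b op"
  assumes "\<forall>k. F k \<subseteq> channels"
    and "\<forall>k. F k \<noteq> {}"
    and "\<forall>k. convex_chans (F k)"
    and "\<Lambda> \<in> channels"
    and "\<Lambda> \<notin> (\<Union>k. F k)"
  shows "(INF k. SUP T\<in>tasks. ereal (p_succ \<Lambda> T) / (SUP \<Xi>\<in>F k. ereal (p_succ \<Xi> T)))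
           = 1 + robustness (\<Union>k. F k) \<Lambda>"
proof -
  have "(INF k. SUP T\<in>tasks. ereal (p_succ \<Lambda> T) / (SUP \<Xi>\<in>F k. ereal (p_succ \<Xi> T)))
      = (INF k. 1 + robustness (F k) \<Lambda>)"
    using assms(1-4) by (simp add: SUP_p_succ_ratio_eq_one_plus_robustness)
  also have "\<dots> = 1 + (INF k. robustness (F k) \<Lambda>)"
    by (rule INF_ereal_add_right) (auto simp: robustness_nonneg)
  also have "\<dots> = 1 + robustness (\<Union>k. F k) \<Lambda>"
    by (simp add: robustness_Union)
  finally show ?thesis .
qed

end
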